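(* Let $a,N$ be integers with $1\le a\le N$. For any $n,d\in\mathbb{N}_0$, $c_1,\dots,c_d\in\mathbb{N}\setminus\{2\}$ and $b_0,\dots,b_d\in\mathbb{N}_0$, $${}_nt^{\star}_{N,a}(\{2\}^{b_0},c_1,\{2\}^{b_1},\dots,c_d,\{2\}^{b_d})=\sum_{n\ge k_0\ge k_1\ge\cdots\ge k_d\ge0}\frac{N\left[\left(\frac{a}{N}\right)_{n+1}\right]^2}{(n-k_0)!\left(\frac{2a}{N}\right)_{n+k_0+1}}\cdot\frac{\left(\frac{2a}{N}\right)_{k_d}}{k_d!(Nk_d+a)}\prod_{i=0}^{d}\frac{(-1)^{k_i\delta_i}}{(Nk_i+a)^{2b_i+3-\delta_i}}W_{k_{i-1},k_i}^{\#}(\{1\}^{c_i-3}),$$ where $k_{-1}=-1$, $c_0=1$, $c_{d+1}=0$ and $\delta_i=\delta(c_i)+\delta(c_{i+1})$.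
   Context: $(x)_m$ is the Pochhammer symbol. $\{s\}^c$ is $s$ repeated $c$ times if $c>0$ and empty otherwise. ${}_nt^{\star}_{N,a}(s_1,\dots,s_u)=\sum_{n\ge k_1\ge\cdots\ge k_u\ge0}\prod_{j}(Nk_j+a)^{-s_j}$, ${}_nt^{\star}_{N,a}(\emptyset)=1$. $\delta(0)=2$, $\delta(1)=1$, $\delta(c)=0$ for $c\ge3$. $\triangle(k,m)=0$ if $k=m$, $1$ otherwise. For an index $\boldsymbol{s}=(s_1,\dots,s_u)$ of positive integers and integers $k,m$: $W_{k,m}^{\#}(\boldsymbol{s})=\sum_{k\ge l_1\ge\cdots\ge l_u\ge m}2^{\triangle(k,l_1)+\triangle(l_1,l_2)+\cdots+\triangle(l_u,m)}\prod_j(Nl_j+a)^{-s_j}$ if $\boldsymbol{s}$ is nonempty and $k\ge m$, and $W_{k,m}^{\#}(\boldsymbol{s})=2^{\triangle(k,m)}$ otherwise. *)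

theory Defs
  imports Complex_Main
begin

definition dchains :: "'a::linorder \<Rightarrow> 'a \<Rightarrow> nat \<Rightarrow> 'a list set" where
  "dchains hi lo u = {l. length l = u \<and> sorted_wrt (\<ge>) l \<and> (\<forall>x\<in>set l. lo \<le> x \<and> x \<le> hi)}"

definition tstar :: "nat \<Rightarrow> int \<Rightarrow> int \<Rightarrow> nat list \<Rightarrow> real" where
  "tstar n N a s = (\<Sum>k\<in>dchains (int n) 0 (length s).
      \<Prod>j<length s. 1 / (real_of_int (N * k!j + a)) ^ (s!j))"

definition tri :: "int \<Rightarrow> int \<Rightarrow> nat" where
  "tri k m = (if k = m then 0 else 1)"

definition tri_sum :: "int list \<Rightarrow> nat" where
  "tri_sum xs = (\<Sum>(x,y)\<leftarrow>zip xs (tl xs). tri x y)"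

definition Wsharp :: "int \<Rightarrow> int \<Rightarrow> int \<Rightarrow> int \<Rightarrow> nat list \<Rightarrow> real" where
  "Wsharp N a k m s = (if s \<noteq> [] \<and> k \<ge> m then
      (\<Sum>l\<in>dchains k m (length s).
         2 ^ tri_sum (k # l @ [m]) * (\<Prod>j<length s. 1 / (real_of_int (N * l!j + a)) ^ (s!j)))
    else 2 ^ tri k m)"

text \<open>delta(0)=2, delta(1)=1, delta(c)=0 for c>=3 (delta(2) is never used; set to 0).\<close>
definition delta :: "nat \<Rightarrow> nat" where
  "delta c = (if c = 0 then 2 else if c = 1 then 1 else 0)"

end

theory Submission
  imports Defs
begin

text \<open>
  Write \<open>T\<^sub>k = N k + a\<close> and \<open>F\<^sub>n(k) = N (x)\<^sub>n\<^sub>+\<^sub>1\<^sup>2 / ((n - k)! (2x)\<^sub>n\<^sub>+\<^sub>k\<^sub>+\<^sub>1)\<close> with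
  \<open>x = a/N\<close>. Both sides of the theorem are sums \<open>\<Sum>\<^sub>k F\<^sub>n(k) g(k)\<close>, and the proof
  tracks how the coefficient function \<open>g\<close> of \<open>t\<^sup>\<star>\<^sub>n(s)\<close>, which does not depend on \<open>n\<close>,
  changes when an entry is put in front of \<open>s\<close>. The two contiguous relations
  \<open>F\<^sub>n(k) T\<^sub>n\<^sub>+\<^sub>1\<^sup>2 = F\<^sub>n\<^sub>+\<^sub>1(k) (T\<^sub>n\<^sub>+\<^sub>1\<^sup>2 - T\<^sub>k\<^sup>2)\<close> and
  \<open>F\<^sub>n(k+1) (T\<^sub>n + T\<^sub>k\<^sub>+\<^sub>1) = F\<^sub>n(k) (T\<^sub>n - T\<^sub>k)\<close> make the sums over the outer
  summation index telescope: an entry \<open>2\<close> divides \<open>g(k)\<close> by \<open>T\<^sub>k\<^sup>2\<close>, and an entry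
  \<open>c = 1\<close> or \<open>c \<ge> 3\<close> turns \<open>g\<close> into a weighted sum of its values at \<open>k' \<le> k\<close> with
  weights \<open>W\<^sup>#\<^sub>k\<^sub>,\<^sub>k\<^sub>'({1}\<^sup>c\<^sup>-\<^sup>3)\<close>. The empty index \<open>t\<^sup>\<star>\<^sub>n(\<emptyset>) = 1\<close> starts the
  induction with \<open>g(k) = 2 (-1)\<^sup>k (2x)\<^sub>k / (k! T\<^sub>k)\<close>, which rests on a Gosper-type closed
  form of the partial sums of \<open>\<Sum>\<^sub>k F\<^sub>m(k) (-1)\<^sup>k (2x)\<^sub>k T\<^sub>k / k!\<close>. Unfolding the
  nested sums produced by the induction on \<open>d\<close> gives the sum over chains
  \<open>n \<ge> k\<^sub>0 \<ge> \<dots> \<ge> k\<^sub>d \<ge> 0\<close>.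
\<close>

section \<open>Chains and nested sums\<close>

lemma dchains_0: "dchains hi lo 0 = {[]}"
  by (auto simp: dchains_def)

lemma dchains_Suc: "dchains hi lo (Suc u) = (\<Union>x\<in>{lo..hi}. (\<lambda>l. x # l) ` dchains x lo u)"
  by (auto simp: dchains_def length_Suc_conv image_iff; fastforce)

lemma finite_dchains:
  assumes "finite {lo..hi}"
  shows "finite (dchains hi lo u)"
proof -
  have "dchains hi lo u \<subseteq> {l. set l \<subseteq> {lo..hi} \<and> length l = u}"
    by (auto simp: dchains_def)
  then show ?thesis
    using finite_lists_length_eq[OF assms] finite_subset by blast
qed

lemma sum_dchains_Suc:
  fixes hi lo :: "'a::linorder"
  assumes "finite {lo..hi}"
  shows "(\<Sum>l\<in>dchains hi lo (Suc u). f l) = (\<Sum>x\<in>{lo..hi}. \<Sum>l\<in>dchains x lo u. f (x # l))"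
proof -
  have fin: "finite (dchains x lo u)" if "x \<in> {lo..hi}" for x
    using that by (intro finite_dchains finite_subset[OF _ assms]) auto
  have "(\<Sum>l\<in>dchains hi lo (Suc u). f l) = (\<Sum>x\<in>{lo..hi}. \<Sum>l\<in>(\<lambda>l. x # l) ` dchains x lo u. f l)"
    unfolding dchains_Suc by (rule sum.UNION_disjoint) (use assms fin in auto)
  also have "\<dots> = (\<Sum>x\<in>{lo..hi}. \<Sum>l\<in>dchains x lo u. f (x # l))"
    by (rule sum.cong[OF refl], subst sum.reindex) (auto simp: inj_on_def)
  finally show ?thesis .
qed

lemma sum_atLeastAtMost_swap:
  "(\<Sum>j\<in>{k..n::nat}. \<Sum>l\<in>{k..j}. g j l) = (\<Sum>l\<in>{k..n}. \<Sum>j\<in>{l..n}. g j l)"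
proof -
  have "(\<Sum>j\<in>{k..n}. \<Sum>l\<in>{k..j}. g j l) = (\<Sum>j\<in>{k..n}. \<Sum>l\<in>{l\<in>{k..n}. l \<le> j}. g j l)"
    by (intro sum.cong) auto
  also have "\<dots> = (\<Sum>l\<in>{k..n}. \<Sum>j\<in>{j\<in>{k..n}. l \<le> j}. g j l)"
    by (rule sum.swap_restrict) auto
  also have "\<dots> = (\<Sum>l\<in>{k..n}. \<Sum>j\<in>{l..n}. g j l)"
    by (intro sum.cong) auto
  finally show ?thesis .
qed

lemma sum_atMost_swap: "(\<Sum>m\<le>n. \<Sum>k\<le>m. g m k) = (\<Sum>k\<le>n. \<Sum>m\<in>{k..n}. g m (k::nat))"
  using sum_atLeastAtMost_swap[where k = 0] by (simp add: atMost_atLeast0)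

lemma neg_one_power_add_double: "(-1 :: 'a::ring_1) ^ (m + 2 * k) = (-1) ^ m"
  by (simp add: power_add power_mult)

lemma partial_fraction_identity:
  fixes M A B X Y D :: "'a::field_char_0"
  assumes "M \<noteq> 0" "A \<noteq> 0" "B \<noteq> 0" "D \<noteq> 0" and "D = Y + M + B" "M = A + B" "Y = 2 * X"
  shows "1 / (2 * M * A) - (B + X) / (A * D * B) = - ((Y + B) / (2 * M * B * D))"
proof -
  have numerator: "B * D - 2 * M * (B + X) = - A * (Y + B)"
    by (simp add: assms(5-7) algebra_simps)
  have "1 / (2 * M * A) - (B + X) / (A * D * B) = (B * D - 2 * M * (B + X)) / (2 * M * A * B * D)"
    using assms(1-4) by (simp add: field_simps)
  also have "\<dots> = - ((Y + B) / (2 * M * B * D))"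
    unfolding numerator using assms(1-4) by (simp add: field_simps)
  finally show ?thesis .
qed

lemma tstar_Nil: "tstar n N a [] = 1"
  by (simp add: tstar_def dchains_0)

lemma tstar_Cons:
  "tstar n N a (s # ss) = (\<Sum>m\<le>n. 1 / real_of_int (N * int m + a) ^ s * tstar m N a ss)"
proof -
  have ints: "{0..int n} = int ` {..n}"
    by (auto simp: image_iff intro!: bexI[of _ "nat x" for x])
  have "tstar n N a (s # ss) = (\<Sum>x\<in>{0..int n}. \<Sum>l\<in>dchains x 0 (length ss).
      1 / real_of_int (N * x + a) ^ s * (\<Prod>j<length ss. 1 / real_of_int (N * l!j + a) ^ (ss!j)))"
    unfolding tstar_def
    by (simp add: sum_dchains_Suc prod.lessThan_Suc_shift del: prod.lessThan_Suc)
  also have "\<dots> = (\<Sum>m\<le>n. \<Sum>l\<in>dchains (int m) 0 (length ss).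
      1 / real_of_int (N * int m + a) ^ s * (\<Prod>j<length ss. 1 / real_of_int (N * l!j + a) ^ (ss!j)))"
    unfolding ints by (subst sum.reindex) auto
  also have "\<dots> = (\<Sum>m\<le>n. 1 / real_of_int (N * int m + a) ^ s * tstar m N a ss)"
    unfolding tstar_def by (simp add: sum_distrib_left)
  finally show ?thesis .
qed

lemma Wsharp_eq_sum:
  assumes "m \<le> k"
  shows "Wsharp N a k m s = (\<Sum>l\<in>dchains k m (length s).
           2 ^ tri_sum (k # l @ [m]) * (\<Prod>j<length s. 1 / real_of_int (N * l!j + a) ^ (s!j)))"
  using assms by (cases "s = []") (auto simp: Wsharp_def dchains_0 tri_sum_def)

lemma Wsharp_replicate_Suc:
  assumes "m \<le> k"
  shows "Wsharp N a k m (replicate (Suc r) 1) =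
    (\<Sum>l\<in>{m..k}. 2 ^ tri k l / real_of_int (N * l + a) * Wsharp N a l m (replicate r 1))"
proof -
  have "Wsharp N a k m (replicate (Suc r) 1) = (\<Sum>x\<in>{m..k}. \<Sum>l\<in>dchains x m r.
      2 ^ tri_sum (k # (x # l) @ [m]) *
      (\<Prod>j<Suc r. 1 / real_of_int (N * (x # l)!j + a) ^ (replicate (Suc r) 1 ! j)))"
    using assms by (simp add: Wsharp_eq_sum sum_dchains_Suc del: replicate_Suc)
  also have "\<dots> = (\<Sum>x\<in>{m..k}. \<Sum>l\<in>dchains x m r.
      2 ^ tri k x / real_of_int (N * x + a) * (2 ^ tri_sum (x # l @ [m]) *
      (\<Prod>j<r. 1 / real_of_int (N * l!j + a) ^ (replicate r 1 ! j))))"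
    by (intro sum.cong refl)
      (simp add: prod.lessThan_Suc_shift tri_sum_def power_add del: prod.lessThan_Suc replicate_Suc)
  also have "\<dots> = (\<Sum>l\<in>{m..k}. 2 ^ tri k l / real_of_int (N * l + a) * Wsharp N a l m (replicate r 1))"
    by (intro sum.cong refl) (simp add: Wsharp_eq_sum sum_distrib_left)
  finally show ?thesis .
qed

section \<open>The coefficients \<open>F\<^sub>n(k)\<close>\<close>

locale tstar_params =
  fixes N a :: int
  assumes N_pos: "0 < N" and a_pos: "0 < a"
begin

definition den :: "nat \<Rightarrow> real" where "den k = real_of_int (N * int k + a)"
definition x :: real where "x = real_of_int a / real_of_int N"
definition y :: real where "y = 2 * real_of_int a / real_of_int N"

definition coef :: "nat \<Rightarrow> nat \<Rightarrow> real" where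
  "coef n k = real_of_int N * (pochhammer x (n+1))^2 / (fact (n - k) * pochhammer y (n + k + 1))"

definition tail :: "nat \<Rightarrow> real" where "tail k = pochhammer y k / (fact k * den k)"

lemma x_pos: "x > 0" and y_pos: "y > 0" and y_eq: "y = 2 * x"
  using N_pos a_pos by (simp_all add: x_def y_def)

lemma den_eq: "den k = real_of_int N * (real k + x)"
  using N_pos by (simp add: den_def x_def field_simps)

lemma den_pos: "den k > 0"
  using N_pos x_pos by (simp add: den_eq)

lemma den_nonzero [simp]: "den k \<noteq> 0"
  using den_pos by (metis less_irrefl)

lemma pochhammer_y_pos: "pochhammer y k > 0"
  using y_pos by (simp add: pochhammer_pos)

lemma coef_upper_Suc:
  assumes "k \<le> n"
  shows "coef n k = coef (Suc n) k * (den (Suc n)^2 - den k^2) / den (Suc n)^2"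
proof -
  obtain e where n: "n = k + e" using assms le_Suc_ex by blast
  define K where "K = N * (pochhammer x (n+1))^2 / (fact e * pochhammer y (n+k+1))"
  have upper: "coef (Suc n) k = K * (x + real (n+1))^2 / ((real e + 1) * (y + real (n+k+1)))"
  proof -
    have "pochhammer x (Suc n + 1) = pochhammer x (n+1) * (x + real (n+1))"
      "pochhammer y (Suc n + k + 1) = pochhammer y (n+k+1) * (y + real (n+k+1))"
      by (simp_all add: pochhammer_rec' mult.commute)
    moreover have "fact (Suc n - k) = (fact e :: real) * (real e + 1)"
      using n by (simp add: Suc_diff_le algebra_simps)
    ultimately show ?thesis
      unfolding coef_def K_def using n by (simp add: power_mult_distrib) (simp add: algebra_simps)
  qed
  have diff: "den (Suc n)^2 - den k^2 = N^2 * ((real e + 1) * (y + real (n+k+1)))"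
    and sq: "den (Suc n)^2 = N^2 * (x + real (n+1))^2"
    by (simp_all add: den_eq y_eq n power2_eq_square algebra_simps)
  have "(real e + 1) * (y + real (n+k+1)) \<noteq> 0"
    using y_pos by (simp add: add_pos_nonneg)
  then have "coef (Suc n) k * (den (Suc n)^2 - den k^2) = K * (N^2 * (x + real (n+1))^2)"
    unfolding upper diff by (simp add: field_simps)
  also have "\<dots> = coef n k * den (Suc n)^2"
    unfolding sq coef_def K_def using n by simp
  finally show ?thesis
    by (simp add: field_simps)
qed

lemma coef_lower_Suc:
  assumes "k < n"
  shows "coef n (Suc k) * (den n + den (Suc k)) = coef n k * (den n - den k)"
proof -
  obtain e where n: "n = Suc k + e" using assms less_imp_Suc_add by blast
  define K where "K = N * (pochhammer x (n+1))^2 / (fact e * pochhammer y (n+k+1))"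
  have coef_k: "coef n k = K / (real e + 1)"
    unfolding coef_def K_def using n by (simp add: algebra_simps)
  have coef_Suc_k: "coef n (Suc k) = K / (y + real (n+k+1))"
    unfolding coef_def K_def using n by (simp add: pochhammer_rec' mult.commute)
  have sum: "den n + den (Suc k) = N * (y + real (n+k+1))" and diff: "den n - den k = N * (real e + 1)"
    by (simp_all add: den_eq y_eq n algebra_simps)
  have "y + real (n+k+1) \<noteq> 0"
    using y_pos by (simp add: add_pos_nonneg)
  then show ?thesis
    unfolding coef_k coef_Suc_k sum diff by (simp add: field_simps)
qed

lemma sum_coef_den_greaterThan:
  assumes "k \<le> n"
  shows "(\<Sum>j\<in>{k<..n}. coef n j * den j) = coef n k * (den n - den k) / 2"
  using assms
proof (induction k rule: inc_induct)
  case (step k)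
  then have "{k<..n} = insert (Suc k) {Suc k<..n}" by auto
  then have "(\<Sum>j\<in>{k<..n}. coef n j * den j)
      = coef n (Suc k) * den (Suc k) + coef n (Suc k) * (den n - den (Suc k)) / 2"
    using step.IH by simp
  also have "\<dots> = coef n (Suc k) * (den n + den (Suc k)) / 2"
    by (simp add: field_simps)
  also have "\<dots> = coef n k * (den n - den k) / 2"
    using coef_lower_Suc[OF step.hyps(2)] by simp
  finally show ?case .
qed simp

lemma sum_alt_coef_greaterThan:
  assumes "k \<le> n"
  shows "(\<Sum>j\<in>{k<..n}. (-1)^j * coef n j) = (-1)^k * coef n k * (den k / den n - 1) / 2"
  using assms
proof (induction k rule: inc_induct)
  case (step k)
  then have "{k<..n} = insert (Suc k) {Suc k<..n}" by auto
  then have "(\<Sum>j\<in>{k<..n}. (-1)^j * coef n j)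
      = (-1)^Suc k * coef n (Suc k) + (-1)^Suc k * coef n (Suc k) * (den (Suc k) / den n - 1) / 2"
    using step.IH by simp
  also have "\<dots> = - ((-1)^k * (coef n (Suc k) * (den n + den (Suc k))) / (2 * den n))"
    by (simp add: field_simps)
  also have "\<dots> = - ((-1)^k * (coef n k * (den n - den k)) / (2 * den n))"
    using coef_lower_Suc[OF step.hyps(2)] by simp
  also have "\<dots> = (-1)^k * coef n k * (den k / den n - 1) / 2"
    by (simp add: field_simps)
  finally show ?case .
qed simp

lemma sum_coef_den_tri:
  assumes "k \<le> n"
  shows "(\<Sum>j\<in>{k..n}. coef n j * den j * 2 ^ tri (int j) (int k)) = coef n k * den n"
proof -
  have "{k..n} = insert k {k<..n}" using assms by auto
  then have "(\<Sum>j\<in>{k..n}. coef n j * den j * 2 ^ tri (int j) (int k))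
      = coef n k * den k + 2 * (\<Sum>j\<in>{k<..n}. coef n j * den j)"
    by (simp add: tri_def sum_distrib_left mult.commute)
  then show ?thesis
    using sum_coef_den_greaterThan[OF assms] by (simp add: field_simps)
qed

lemma sum_alt_coef_tri:
  assumes "k \<le> n"
  shows "(\<Sum>j\<in>{k..n}. (-1)^j * coef n j * 2 ^ tri (int j) (int k)) = (-1)^k * coef n k * den k / den n"
proof -
  have "{k..n} = insert k {k<..n}" using assms by auto
  then have "(\<Sum>j\<in>{k..n}. (-1)^j * coef n j * 2 ^ tri (int j) (int k))
      = (-1)^k * coef n k + 2 * (\<Sum>j\<in>{k<..n}. (-1)^j * coef n j)"
    by (simp add: tri_def sum_distrib_left mult.commute)
  then show ?thesis
    using sum_alt_coef_greaterThan[OF assms] by (simp add: field_simps)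
qed

definition Wones :: "nat \<Rightarrow> nat \<Rightarrow> nat \<Rightarrow> real" where
  "Wones j k r = Wsharp N a (int j) (int k) (replicate r 1)"

lemma Wones_0: "k \<le> j \<Longrightarrow> Wones j k 0 = 2 ^ tri (int j) (int k)"
  by (simp add: Wones_def Wsharp_def)

lemma Wones_Suc:
  assumes "k \<le> j"
  shows "Wones j k (Suc r) = (\<Sum>l\<in>{k..j}. 2 ^ tri (int j) (int l) / den l * Wones l k r)"
proof -
  have "Wones j k (Suc r) = (\<Sum>l\<in>{int k..int j}.
      2 ^ tri (int j) l / real_of_int (N * l + a) * Wsharp N a l (int k) (replicate r 1))"
    unfolding Wones_def using assms by (intro Wsharp_replicate_Suc) simp
  also have "\<dots> = (\<Sum>l\<in>{k..j}. 2 ^ tri (int j) (int l) / den l * Wones l k r)"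
    by (simp add: image_int_atLeastAtMost[symmetric] sum.reindex Wones_def den_def)
  finally show ?thesis .
qed

lemma Wones_diag: "Wones k k r = 1 / den k ^ r"
  by (induction r) (simp_all add: Wones_0 Wones_Suc tri_def)

lemma sum_alt_coef_Wones:
  assumes "k \<le> n"
  shows "(\<Sum>j\<in>{k..n}. coef n j * (-1)^j * Wones j k r) = (-1)^k * den k * coef n k / den n^(r+1)"
proof (induction r)
  case 0
  then show ?case
    using sum_alt_coef_tri[OF assms] by (simp add: Wones_0 mult_ac)
next
  case (Suc r)
  have "(\<Sum>j\<in>{k..n}. coef n j * (-1)^j * Wones j k (Suc r)) =
      (\<Sum>j\<in>{k..n}. \<Sum>l\<in>{k..j}. Wones l k r / den l * ((-1)^j * coef n j * 2 ^ tri (int j) (int l)))"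
    by (intro sum.cong refl) (simp add: Wones_Suc sum_distrib_left mult_ac)
  also have "\<dots> = (\<Sum>l\<in>{k..n}. Wones l k r / den l *
      (\<Sum>j\<in>{l..n}. (-1)^j * coef n j * 2 ^ tri (int j) (int l)))"
    by (simp add: sum_atLeastAtMost_swap sum_distrib_left)
  also have "\<dots> = (\<Sum>l\<in>{k..n}. coef n l * (-1)^l * Wones l k r) / den n"
    unfolding sum_divide_distrib by (intro sum.cong refl) (simp add: sum_alt_coef_tri)
  also have "\<dots> = (-1)^k * den k * coef n k / den n^(Suc r + 1)"
    using Suc by simp
  finally show ?case .
qed

lemma sum_coef_upper_Suc:
  assumes "k \<le> n"
  shows "(\<Sum>j\<in>{k..Suc n}. coef (Suc n) j * w j / den j^2) =
    (\<Sum>j\<in>{k..n}. coef n j * w j / den j^2) + (\<Sum>j\<in>{k..Suc n}. coef (Suc n) j * w j) / den (Suc n)^2"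
proof -
  have "(\<Sum>j\<in>{k..n}. coef n j * w j / den j^2) =
      (\<Sum>j\<in>{k..n}. coef (Suc n) j * w j / den j^2) - (\<Sum>j\<in>{k..n}. coef (Suc n) j * w j) / den (Suc n)^2"
    unfolding sum_divide_distrib sum_subtractf[symmetric]
    by (intro sum.cong refl) (simp add: coef_upper_Suc[of _ n] field_simps power2_eq_square)
  then show ?thesis
    using assms by (simp add: field_simps)
qed

lemma sum_coef_div_den_sq:
  assumes "k \<le> n"
  shows "(\<Sum>m\<in>{k..n}. coef m k / den m ^ 2) = coef n k / den k ^ 2"
  using assms
proof (induction n rule: dec_induct)
  case (step n)
  then have "(\<Sum>m\<in>{k..Suc n}. coef m k / den m ^ 2) = coef n k / den k ^ 2 + coef (Suc n) k / den (Suc n) ^ 2"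
    by simp
  also have "\<dots> = coef (Suc n) k / den k ^ 2"
    unfolding coef_upper_Suc[OF step(1)] by (simp add: field_simps)
  finally show ?case .
qed simp

lemma sum_coef_div_den:
  assumes "k \<le> n"
  shows "(\<Sum>m\<in>{k..n}. coef m k / den m) = (\<Sum>j\<in>{k..n}. coef n j / den j * 2 ^ tri (int j) (int k))"
  using assms
proof (induction n rule: dec_induct)
  case (step n)
  let ?w = "\<lambda>j. den j * 2 ^ tri (int j) (int k)"
  have "(\<Sum>j\<in>{k..Suc n}. coef (Suc n) j / den j * 2 ^ tri (int j) (int k)) =
      (\<Sum>j\<in>{k..Suc n}. coef (Suc n) j * ?w j / den j^2)"
    by (intro sum.cong refl) (simp add: power2_eq_square)
  also have "\<dots> = (\<Sum>j\<in>{k..n}. coef n j * ?w j / den j^2) + coef (Suc n) k * den (Suc n) / den (Suc n)^2"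
    using sum_coef_den_tri[of k "Suc n"] step(1)
    by (simp only: sum_coef_upper_Suc[OF step(1)] mult.assoc)
  also have "\<dots> = (\<Sum>m\<in>{k..Suc n}. coef m k / den m)"
    using step by (simp add: power2_eq_square)
  finally show ?case ..
qed (simp add: tri_def)

lemma sum_coef_div_den_pow:
  assumes "k \<le> n"
  shows "(\<Sum>j\<in>{k..n}. coef n j * (-1)^j / den j^2 * Wones j k r) =
    (-1)^k * den k * (\<Sum>m\<in>{k..n}. coef m k / den m^(r+3))"
  using assms
proof (induction n rule: dec_induct)
  case base
  then show ?case
    by (simp add: Wones_diag field_simps power2_eq_square power_add eval_nat_numeral)
next
  case (step n)
  let ?w = "\<lambda>j. (-1)^j * Wones j k r"
  have "(\<Sum>j\<in>{k..Suc n}. coef (Suc n) j * (-1)^j / den j^2 * Wones j k r) =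
      (\<Sum>j\<in>{k..Suc n}. coef (Suc n) j * ?w j / den j^2)"
    by (intro sum.cong refl) simp
  also have "\<dots> = (\<Sum>j\<in>{k..n}. coef n j * ?w j / den j^2) +
      (-1)^k * den k * coef (Suc n) k / den (Suc n)^(r+3)"
    using sum_alt_coef_Wones[of k "Suc n" r] step(1)
    by (simp only: sum_coef_upper_Suc[OF step(1)] mult.assoc mult.left_commute[of "(-1)^_"])
      (simp add: power_add eval_nat_numeral field_simps)
  also have "\<dots> = (-1)^k * den k * (\<Sum>m\<in>{k..Suc n}. coef m k / den m^(r+3))"
    using step by (simp add: mult.assoc distrib_left)
  finally show ?case
    by (simp add: mult.assoc)
qed

definition alt_term :: "nat \<Rightarrow> nat \<Rightarrow> real" where
  "alt_term m k = coef m k * (-1)^k * pochhammer y k * den k / fact k"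

lemma sum_alt_term_partial:
  assumes "j < m"
  shows "(\<Sum>k\<le>j. alt_term m k) = N^2 * (pochhammer x (m+1))^2 *
    ((-1)^j * pochhammer y (j+1) / (2 * real m * fact j * fact (m - j - 1) * pochhammer y (m+j+1)))"
  using assms
proof (induction j)
  case 0
  then obtain m' where m: "m = Suc m'" by (cases m) auto
  define p where "p = pochhammer y (Suc m)"
  have "fact m = real m * (fact m' :: real)" using m by simp
  then have "(\<Sum>k\<le>0. alt_term m k) = N * (pochhammer x (m+1))^2 / (real m * fact m' * p) * (N * x)"
    unfolding alt_term_def coef_def p_def by (simp add: den_eq)
  also have "\<dots> = N^2 * (pochhammer x (m+1))^2 *
      (pochhammer y 1 / (2 * real m * fact 0 * fact (m - 0 - 1) * pochhammer y (m+0+1)))"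
  proof -
    have e: "m - 0 - 1 = m'" "m + 0 + 1 = Suc m" using m by auto
    have "p > 0" unfolding p_def by (rule pochhammer_y_pos)
    moreover have "real m > 0" using m by simp
    ultimately show ?thesis
      unfolding e p_def[symmetric] using x_pos by (simp add: y_eq field_simps power2_eq_square)
  qed
  finally show ?case by simp
next
  case (Suc j)
  define e where "e = m - j - 2"
  have m: "m = j + 2 + e" using Suc.prems unfolding e_def by simp
  define Q where "Q = N^2 * (pochhammer x (m+1))^2 * (-1)^j * pochhammer y (j+1) /
    (fact j * fact e * pochhammer y (m+j+1))"
  have py: "pochhammer y (Suc j + 1) = pochhammer y (j+1) * (y + real (j+1))"
    "pochhammer y (m + Suc j + 1) = pochhammer y (m+j+1) * (y + real (m+j+1))"
    by (simp_all add: pochhammer_rec' mult.commute)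
  have facts: "m - j - 1 = Suc e" "m - Suc j - 1 = e" "m - Suc j = Suc e"
    using m by auto
  have partial: "(\<Sum>k\<le>j. alt_term m k) = Q / (2 * real m * (real e + 1))"
    using Suc unfolding Q_def facts by (simp add: field_simps)
  have last: "alt_term m (Suc j) = - Q * (real j + 1 + x) / ((real e + 1) * (y + real (m+j+1)) * (real j + 1))"
    unfolding alt_term_def coef_def Q_def facts py by (simp add: den_eq field_simps power2_eq_square)
  have closed: "N^2 * (pochhammer x (m+1))^2 * ((-1)^Suc j * pochhammer y (Suc j+1) /
      (2 * real m * fact (Suc j) * fact (m - Suc j - 1) * pochhammer y (m+Suc j+1)))
    = - (Q * ((y + (real j + 1)) / (2 * real m * (real j + 1) * (y + real (m+j+1)))))"
    unfolding Q_def facts py by (simp add: divide_inverse inverse_mult_distrib mult_ac add_ac)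
  have key: "1 / (2 * real m * (real e + 1)) -
      (real j + 1 + x) / ((real e + 1) * (y + real (m+j+1)) * (real j + 1))
      = - ((y + (real j + 1)) / (2 * real m * (real j + 1) * (y + real (m+j+1))))"
    by (rule partial_fraction_identity) (use y_pos m y_eq in \<open>auto simp: add_pos_nonneg\<close>)
  have "(\<Sum>k\<le>Suc j. alt_term m k) = Q / (2 * real m * (real e + 1)) -
      Q * (real j + 1 + x) / ((real e + 1) * (y + real (m+j+1)) * (real j + 1))"
    unfolding sum.atMost_Suc partial last by simp
  also have "\<dots> = Q * (1 / (2 * real m * (real e + 1)) -
      (real j + 1 + x) / ((real e + 1) * (y + real (m+j+1)) * (real j + 1)))"
    by (simp add: algebra_simps)
  finally show ?case
    unfolding key closed by simp
qed

lemma sum_alt_term_eq_0: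
  assumes "1 \<le> m"
  shows "(\<Sum>k\<le>m. alt_term m k) = 0"
proof -
  obtain m' where m: "m = Suc m'" using assms by (cases m) auto
  define Q where "Q = N^2 * (pochhammer x (m+1))^2 * (-1)^m' * pochhammer y (m'+1) /
    (fact m' * pochhammer y (m+m'+1))"
  have partial: "(\<Sum>k\<le>m'. alt_term m k) = Q / (2 * (real m' + 1))"
    using sum_alt_term_partial[of m' m] m unfolding Q_def by (simp add: field_simps)
  have "pochhammer y (m + m + 1) = pochhammer y (m+m'+1) * (y + real (m+m'+1))"
    using m by (simp add: pochhammer_rec' mult.commute)
  moreover have "pochhammer y m = pochhammer y (m'+1)" using m by simp
  moreover have "fact m = (real m' + 1) * (fact m' :: real)" using m by (simp add: algebra_simps)
  ultimately have last: "alt_term m m = - Q * (real m' + 1 + x) / ((real m' + 1) * (y + real (m+m'+1)))"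
    unfolding alt_term_def coef_def Q_def using m by (simp add: den_eq field_simps power2_eq_square)
  have yp: "y + real (m+m'+1) = 2 * (real m' + 1 + x)" using m by (simp add: y_eq)
  have "real m' + 1 + x > 0" using x_pos by simp
  then have "Q / (2 * (real m' + 1)) + alt_term m m = 0"
    unfolding last yp by (simp add: divide_simps) (simp add: algebra_simps)
  then show ?thesis
    using m partial by simp
qed

section \<open>Expansions of truncated t-star values\<close>

definition has_expansion :: "nat list \<Rightarrow> (nat \<Rightarrow> real) \<Rightarrow> bool" where
  "has_expansion s g \<longleftrightarrow> (\<forall>m. tstar m N a s = (\<Sum>k\<le>m. coef m k * g k))"

lemma has_expansion_Nil: "has_expansion [] (\<lambda>k. 2 * (-1)^k * tail k)"
  unfolding has_expansion_def tstar_Nil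
proof
  fix n
  show "1 = (\<Sum>k\<le>n. coef n k * (2 * (-1)^k * tail k))"
  proof (induction n)
    case 0
    show ?case
      using x_pos N_pos by (simp add: coef_def tail_def den_eq y_eq power2_eq_square field_simps)
  next
    case (Suc n)
    let ?w = "\<lambda>k. den k^2 * (2 * (-1)^k * tail k)"
    have w: "coef m k * ?w k = 2 * alt_term m k" for m k
      by (simp add: alt_term_def tail_def field_simps power2_eq_square)
    have "(\<Sum>k\<in>{0..Suc n}. coef (Suc n) k * ?w k) = 2 * (\<Sum>k\<le>Suc n. alt_term (Suc n) k)"
      by (simp add: w atMost_atLeast0 sum_distrib_left)
    also have "\<dots> = 0"
      using sum_alt_term_eq_0[of "Suc n"] by simp
    finally have "(\<Sum>k\<in>{0..Suc n}. coef (Suc n) k * ?w k / den k^2) = (\<Sum>k\<in>{0..n}. coef n k * ?w k / den k^2)"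
      by (simp only: sum_coef_upper_Suc[OF le0])
    then show ?case
      using Suc.IH by (simp add: atMost_atLeast0 mult.assoc)
  qed
qed

lemma tstar_Cons_den: "tstar n N a (s # ss) = (\<Sum>m\<le>n. 1 / den m ^ s * tstar m N a ss)"
  by (simp add: tstar_Cons den_def)

lemma has_expansion_replicate_2:
  assumes "has_expansion s g"
  shows "has_expansion (replicate b 2 @ s) (\<lambda>k. g k / den k ^ (2 * b))"
proof (induction b)
  case 0
  then show ?case using assms by simp
next
  case (Suc b)
  show ?case
    unfolding has_expansion_def
  proof
    fix n
    have "tstar n N a (replicate (Suc b) 2 @ s) =
        (\<Sum>m\<le>n. \<Sum>k\<le>m. 1 / den m ^ 2 * (coef m k * (g k / den k ^ (2 * b))))"
      using Suc unfolding has_expansion_def by (simp add: tstar_Cons_den sum_distrib_left)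
    also have "\<dots> = (\<Sum>k\<le>n. g k / den k ^ (2 * b) * (\<Sum>m\<in>{k..n}. coef m k / den m ^ 2))"
      unfolding sum_atMost_swap sum_distrib_left by (intro sum.cong refl) (simp add: mult_ac)
    also have "\<dots> = (\<Sum>k\<le>n. g k / den k ^ (2 * b) * (coef n k / den k ^ 2))"
      by (intro sum.cong refl) (simp add: sum_coef_div_den_sq)
    also have "\<dots> = (\<Sum>k\<le>n. coef n k * (g k / den k ^ (2 * Suc b)))"
      by (intro sum.cong refl) (simp add: field_simps power_add power2_eq_square)
    finally show "tstar n N a (replicate (Suc b) 2 @ s) = (\<Sum>k\<le>n. coef n k * (g k / den k ^ (2 * Suc b)))" .
  qed
qed

lemma sum_coef_div_den_power:
  assumes "c = 1 \<or> 3 \<le> c" and "k \<le> n"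
  shows "(\<Sum>m\<in>{k..n}. coef m k / den m ^ c) = (-1)^(k * (1 + delta c)) / den k ^ (1 - delta c) *
    (\<Sum>j\<in>{k..n}. coef n j * (-1)^(j * (1 + delta c)) / den j ^ (2 - delta c) * Wones j k (c - 3))"
proof (cases "c = 1")
  case True
  have "(-1::real)^(i * 2) = 1" for i
    by (rule neg_one_even_power) simp
  then show ?thesis
    using True assms(2) by (simp add: delta_def Wones_0 sum_coef_div_den)
next
  case False
  with assms obtain r where c: "c = r + 3"
    by (metis add.commute le_Suc_ex)
  then show ?thesis
    using sum_coef_div_den_pow[OF assms(2), of r] by (simp add: delta_def field_simps)
qed

lemma has_expansion_Cons:
  assumes "c = 1 \<or> 3 \<le> c" and "has_expansion s g"
  shows "has_expansion (c # s) (\<lambda>j. (-1)^(j * (1 + delta c)) / den j ^ (2 - delta c) *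
    (\<Sum>k\<in>{0..j}. (-1)^(k * (1 + delta c)) / den k ^ (1 - delta c) * Wones j k (c - 3) * g k))"
  unfolding has_expansion_def
proof
  fix n
  let ?\<sigma> = "\<lambda>i. (-1::real)^(i * (1 + delta c))"
  have "tstar n N a (c # s) = (\<Sum>m\<le>n. \<Sum>k\<le>m. 1 / den m ^ c * (coef m k * g k))"
    using assms(2) unfolding has_expansion_def by (simp add: tstar_Cons_den sum_distrib_left)
  also have "\<dots> = (\<Sum>k\<le>n. g k * (\<Sum>m\<in>{k..n}. coef m k / den m ^ c))"
    unfolding sum_atMost_swap sum_distrib_left by (intro sum.cong refl) (simp add: mult_ac)
  also have "\<dots> = (\<Sum>k\<le>n. g k * (?\<sigma> k / den k ^ (1 - delta c) *
      (\<Sum>j\<in>{k..n}. coef n j * ?\<sigma> j / den j ^ (2 - delta c) * Wones j k (c - 3))))"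
    by (intro sum.cong refl) (simp add: sum_coef_div_den_power[OF assms(1)])
  also have "\<dots> = (\<Sum>k\<le>n. \<Sum>j\<in>{k..n}. coef n j * ?\<sigma> j / den j ^ (2 - delta c) *
      (?\<sigma> k / den k ^ (1 - delta c) * Wones j k (c - 3) * g k))"
    unfolding sum_distrib_left by (intro sum.cong refl) (simp add: mult_ac)
  also have "\<dots> = (\<Sum>j\<le>n. coef n j * (?\<sigma> j / den j ^ (2 - delta c) *
      (\<Sum>k\<in>{0..j}. ?\<sigma> k / den k ^ (1 - delta c) * Wones j k (c - 3) * g k)))"
    unfolding sum_atMost_swap[symmetric] atLeast0AtMost sum_distrib_left
    by (intro sum.cong refl) (simp add: mult_ac)
  finally show "tstar n N a (c # s) = (\<Sum>j\<le>n. coef n j * (?\<sigma> j / den j ^ (2 - delta c) *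
      (\<Sum>k\<in>{0..j}. ?\<sigma> k / den k ^ (1 - delta c) * Wones j k (c - 3) * g k)))" .
qed

lemma sign_den_power_combine:
  assumes "\<delta>\<^sub>1 \<le> 1" and "\<delta>\<^sub>2 \<le> 2"
  shows "(-1)^(k * (1 + \<delta>\<^sub>1)) / den k ^ (1 - \<delta>\<^sub>1) * ((-1)^(k * (1 + \<delta>\<^sub>2)) / den k ^ (e + 2 - \<delta>\<^sub>2)) =
    (-1)^(k * (\<delta>\<^sub>1 + \<delta>\<^sub>2)) / den k ^ (e + 3 - (\<delta>\<^sub>1 + \<delta>\<^sub>2))"
proof -
  have "k * (1 + \<delta>\<^sub>1) + k * (1 + \<delta>\<^sub>2) = k * (\<delta>\<^sub>1 + \<delta>\<^sub>2) + 2 * k"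
    by (simp add: algebra_simps)
  then have sign: "(-1::real)^(k * (1 + \<delta>\<^sub>1)) * (-1)^(k * (1 + \<delta>\<^sub>2)) = (-1)^(k * (\<delta>\<^sub>1 + \<delta>\<^sub>2))"
    by (metis power_add neg_one_power_add_double)
  have "(1 - \<delta>\<^sub>1) + (e + 2 - \<delta>\<^sub>2) = e + 3 - (\<delta>\<^sub>1 + \<delta>\<^sub>2)"
    using assms by arith
  then have "den k ^ (1 - \<delta>\<^sub>1) * den k ^ (e + 2 - \<delta>\<^sub>2) = den k ^ (e + 3 - (\<delta>\<^sub>1 + \<delta>\<^sub>2))"
    by (metis power_add)
  with sign show ?thesis
    by simp
qed

end

section \<open>Sums over chains\<close>

definition tstar_index :: "nat \<Rightarrow> (nat \<Rightarrow> nat) \<Rightarrow> (nat \<Rightarrow> nat) \<Rightarrow> nat list" where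
  "tstar_index d c b = replicate (b 0) 2 @ concat (map (\<lambda>i. c i # replicate (b i) 2) [1..<d+1])"

lemma tstar_index_0: "tstar_index 0 c b = replicate (b 0) 2"
  by (simp add: tstar_index_def)

lemma tstar_index_Suc: "tstar_index (Suc d) c b = replicate (b 0) 2 @ c 1 # tstar_index d (c \<circ> Suc) (b \<circ> Suc)"
proof -
  have "[1..<Suc d + 1] = 1 # map Suc [1..<d+1]"
    by (simp add: upt_conv_Cons map_Suc_upt del: upt_Suc)
  then show ?thesis by (simp add: tstar_index_def comp_def)
qed

definition c_ext :: "nat \<Rightarrow> (nat \<Rightarrow> nat) \<Rightarrow> nat \<Rightarrow> nat" where
  "c_ext d c i = (if i = 0 then 1 else if i \<le> d then c i else 0)"

definition delta_at :: "nat \<Rightarrow> (nat \<Rightarrow> nat) \<Rightarrow> nat \<Rightarrow> nat" where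
  "delta_at d c i = delta (c_ext d c i) + delta (c_ext d c (i + 1))"

lemma c_ext_Suc: "0 < i \<Longrightarrow> c_ext (Suc d) c (Suc i) = c_ext d (c \<circ> Suc) i"
  by (simp add: c_ext_def)

lemma delta_at_Suc: "0 < i \<Longrightarrow> delta_at (Suc d) c (Suc i) = delta_at d (c \<circ> Suc) i"
  by (simp add: delta_at_def c_ext_Suc)

context tstar_params
begin

definition factor :: "nat \<Rightarrow> (nat \<Rightarrow> nat) \<Rightarrow> (nat \<Rightarrow> nat) \<Rightarrow> nat list \<Rightarrow> nat \<Rightarrow> real" where
  "factor d c b k i = (-1) ^ (k!i * delta_at d c i) / den (k!i) ^ (2 * b i + 3 - delta_at d c i)
     * Wsharp N a (if i = 0 then -1 else int (k!(i-1))) (int (k!i)) (replicate (c_ext d c i - 3) 1)"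

definition lead :: "nat \<Rightarrow> (nat \<Rightarrow> nat) \<Rightarrow> (nat \<Rightarrow> nat) \<Rightarrow> nat \<Rightarrow> real" where
  "lead d c b k = 2 * (-1)^(k * (1 + delta (c_ext d c 1))) / den k ^ (2 * b 0 + 2 - delta (c_ext d c 1))"

definition chain_term :: "nat \<Rightarrow> (nat \<Rightarrow> nat) \<Rightarrow> (nat \<Rightarrow> nat) \<Rightarrow> nat list \<Rightarrow> real" where
  "chain_term d c b k = tail (k!d) * (\<Prod>i\<in>{1..d}. factor d c b k i)"

definition chain_sum :: "nat \<Rightarrow> (nat \<Rightarrow> nat) \<Rightarrow> (nat \<Rightarrow> nat) \<Rightarrow> nat \<Rightarrow> real" where
  "chain_sum d c b k = (\<Sum>l\<in>dchains k 0 d. chain_term d c b (k # l))"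

lemma factor_0: "factor d c b (k # l) 0 = lead d c b k"
  by (simp add: factor_def lead_def delta_at_def c_ext_def Wsharp_def tri_def delta_def)

lemma factor_1:
  "factor (Suc d) c b (k\<^sub>0 # k\<^sub>1 # l) 1 =
    (-1)^(k\<^sub>1 * (delta (c 1) + delta (c_ext d (c \<circ> Suc) 1))) /
      den k\<^sub>1 ^ (2 * b 1 + 3 - (delta (c 1) + delta (c_ext d (c \<circ> Suc) 1))) * Wones k\<^sub>0 k\<^sub>1 (c 1 - 3)"
proof -
  have "delta_at (Suc d) c 1 = delta (c 1) + delta (c_ext d (c \<circ> Suc) 1)"
    by (simp add: delta_at_def c_ext_def)
  moreover have "c_ext (Suc d) c 1 = c 1"
    by (simp add: c_ext_def)
  ultimately show ?thesis
    by (simp add: factor_def Wones_def)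
qed

lemma chain_term_Suc:
  "chain_term (Suc d) c b (k\<^sub>0 # k\<^sub>1 # l) =
    factor (Suc d) c b (k\<^sub>0 # k\<^sub>1 # l) 1 * chain_term d (c \<circ> Suc) (b \<circ> Suc) (k\<^sub>1 # l)"
proof -
  let ?f = "factor (Suc d) c b (k\<^sub>0 # k\<^sub>1 # l)"
  have "prod ?f {1..Suc d} = ?f 1 * prod ?f {Suc 1..Suc d}"
    by (rule prod.atLeast_Suc_atMost) simp
  also have "prod ?f {Suc 1..Suc d} = (\<Prod>i\<in>{1..d}. ?f (Suc i))"
    by (rule prod.shift_bounds_cl_Suc_ivl)
  also have "\<dots> = (\<Prod>i\<in>{1..d}. factor d (c \<circ> Suc) (b \<circ> Suc) (k\<^sub>1 # l) i)"
    by (intro prod.cong refl) (auto simp: factor_def delta_at_Suc c_ext_Suc nth_Cons')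
  finally show ?thesis
    unfolding chain_term_def by (simp add: mult_ac)
qed

lemma chain_sum_0: "chain_sum 0 c b k = tail k"
  by (simp add: chain_sum_def chain_term_def dchains_0)

lemma chain_sum_Suc:
  "chain_sum (Suc d) c b k\<^sub>0 = (\<Sum>k\<^sub>1\<in>{0..k\<^sub>0}.
    (-1)^(k\<^sub>1 * (delta (c 1) + delta (c_ext d (c \<circ> Suc) 1))) /
      den k\<^sub>1 ^ (2 * b 1 + 3 - (delta (c 1) + delta (c_ext d (c \<circ> Suc) 1))) * Wones k\<^sub>0 k\<^sub>1 (c 1 - 3)
    * chain_sum d (c \<circ> Suc) (b \<circ> Suc) k\<^sub>1)"
  unfolding chain_sum_def sum_dchains_Suc[of "0::nat", simplified] chain_term_Suc factor_1
  by (simp add: sum_distrib_left)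

lemma lead_mult_chain_sum_0: "lead 0 c b k * chain_sum 0 c b k = 2 * (-1)^k * tail k / den k ^ (2 * b 0)"
proof -
  have "k + (k + k) = k + 2 * k" by simp
  then have "(-1::real)^(k + (k + k)) = (-1)^k"
    by (metis neg_one_power_add_double)
  then show ?thesis
    by (simp add: lead_def chain_sum_0 c_ext_def delta_def)
qed

lemma lead_mult_chain_sum_Suc:
  assumes "0 < c 1"
  shows "lead (Suc d) c b j * chain_sum (Suc d) c b j =
    (-1)^(j * (1 + delta (c 1))) / den j ^ (2 - delta (c 1)) *
      (\<Sum>k\<in>{0..j}. (-1)^(k * (1 + delta (c 1))) / den k ^ (1 - delta (c 1)) * Wones j k (c 1 - 3) *
        (lead d (c \<circ> Suc) (b \<circ> Suc) k * chain_sum d (c \<circ> Suc) (b \<circ> Suc) k)) / den j ^ (2 * b 0)"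
proof -
  define \<delta>\<^sub>1 where "\<delta>\<^sub>1 = delta (c 1)"
  define \<delta>\<^sub>2 where "\<delta>\<^sub>2 = delta (c_ext d (c \<circ> Suc) 1)"
  have "\<delta>\<^sub>1 \<le> 1" "\<delta>\<^sub>2 \<le> 2"
    using assms by (simp_all add: \<delta>\<^sub>1_def \<delta>\<^sub>2_def delta_def)
  have inner: "(-1)^(k * (1 + \<delta>\<^sub>1)) / den k ^ (1 - \<delta>\<^sub>1) * lead d (c \<circ> Suc) (b \<circ> Suc) k =
      2 * ((-1)^(k * (\<delta>\<^sub>1 + \<delta>\<^sub>2)) / den k ^ (2 * b 1 + 3 - (\<delta>\<^sub>1 + \<delta>\<^sub>2)))" for k
  proof -
    have "lead d (c \<circ> Suc) (b \<circ> Suc) k = 2 * ((-1)^(k * (1 + \<delta>\<^sub>2)) / den k ^ (2 * b 1 + 2 - \<delta>\<^sub>2))"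
      by (simp add: lead_def \<delta>\<^sub>2_def)
    then show ?thesis
      using sign_den_power_combine[OF \<open>\<delta>\<^sub>1 \<le> 1\<close> \<open>\<delta>\<^sub>2 \<le> 2\<close>, of k "2 * b 1"]
      by (simp only: mult.left_commute[of _ 2])
  qed
  have outer: "(-1)^(j * (1 + \<delta>\<^sub>1)) / den j ^ (2 - \<delta>\<^sub>1) / den j ^ (2 * b 0) =
      (-1)^(j * (1 + \<delta>\<^sub>1)) / den j ^ (2 * b 0 + 2 - \<delta>\<^sub>1)"
  proof -
    have "2 - \<delta>\<^sub>1 + 2 * b 0 = 2 * b 0 + 2 - \<delta>\<^sub>1"
      using \<open>\<delta>\<^sub>1 \<le> 1\<close> by arith
    then show ?thesis
      by (simp only: divide_divide_eq_left power_add[symmetric])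
  qed
  have "delta (c_ext (Suc d) c 1) = \<delta>\<^sub>1"
    by (simp add: c_ext_def \<delta>\<^sub>1_def)
  then have "lead (Suc d) c b j * chain_sum (Suc d) c b j =
      (-1)^(j * (1 + \<delta>\<^sub>1)) / den j ^ (2 - \<delta>\<^sub>1) / den j ^ (2 * b 0) *
      (\<Sum>k\<in>{0..j}. ((-1)^(k * (1 + \<delta>\<^sub>1)) / den k ^ (1 - \<delta>\<^sub>1) * lead d (c \<circ> Suc) (b \<circ> Suc) k) *
        Wones j k (c 1 - 3) * chain_sum d (c \<circ> Suc) (b \<circ> Suc) k)"
    unfolding outer inner
    unfolding lead_def chain_sum_Suc \<delta>\<^sub>1_def[symmetric] \<delta>\<^sub>2_def[symmetric]
    by (simp add: sum_distrib_left mult_ac)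
  then show ?thesis
    unfolding \<delta>\<^sub>1_def by (simp add: mult_ac)
qed

lemma has_expansion_tstar_index:
  assumes "\<forall>i\<in>{1..d}. 1 \<le> c i \<and> c i \<noteq> 2"
  shows "has_expansion (tstar_index d c b) (\<lambda>k. lead d c b k * chain_sum d c b k)"
  using assms
proof (induction d arbitrary: c b)
  case 0
  show ?case
    unfolding lead_mult_chain_sum_0 tstar_index_0
    using has_expansion_replicate_2[OF has_expansion_Nil, of "b 0"] by (simp only: append_Nil2)
next
  case (Suc d)
  then have "1 \<le> c 1" "c 1 \<noteq> 2"
    by auto
  then have "0 < c 1" and c1: "c 1 = 1 \<or> 3 \<le> c 1"
    by auto
  have "has_expansion (tstar_index d (c \<circ> Suc) (b \<circ> Suc))
      (\<lambda>k. lead d (c \<circ> Suc) (b \<circ> Suc) k * chain_sum d (c \<circ> Suc) (b \<circ> Suc) k)"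
    using Suc.IH Suc.prems by simp
  then show ?case
    unfolding lead_mult_chain_sum_Suc[where c = c, OF \<open>0 < c 1\<close>] tstar_index_Suc
    by (rule has_expansion_replicate_2[OF has_expansion_Cons[OF c1]])
qed

lemma sum_dchains_eq_expansion:
  "(\<Sum>k\<in>dchains n 0 (d+1). coef n (k!0) * tail (k!d) * (\<Prod>i\<in>{0..d}. factor d c b k i)) =
    (\<Sum>k\<le>n. coef n k * (lead d c b k * chain_sum d c b k))"
proof -
  have split: "coef n ((k # l)!0) * tail ((k # l)!d) * (\<Prod>i\<in>{0..d}. factor d c b (k # l) i) =
      coef n k * (lead d c b k * chain_term d c b (k # l))" for k l
    using prod.atLeast_Suc_atMost[of 0 d "factor d c b (k # l)"]
    by (simp add: factor_0 chain_term_def mult_ac)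
  show ?thesis
    unfolding Suc_eq_plus1[symmetric] sum_dchains_Suc[of "0::nat", simplified] split
    by (simp add: chain_sum_def sum_distrib_left atMost_atLeast0)
qed

end

theorem mainTheorem4:
  fixes N a :: int and n d :: nat and c b :: "nat \<Rightarrow> nat"
  assumes "1 \<le> a" and "a \<le> N"
    and "\<forall>i\<in>{1..d}. c i \<ge> 1 \<and> c i \<noteq> 2"
  shows "tstar n N a (replicate (b 0) 2 @ concat (map (\<lambda>i. c i # replicate (b i) 2) [1..<d+1])) =
    (let cc = (\<lambda>i. if i = 0 then 1 else if i \<le> d then c i else 0);
         \<delta> = (\<lambda>i. delta (cc i) + delta (cc (i+1)));
         x = real_of_int a / real_of_int N;
         y = 2 * real_of_int a / real_of_int N
     in (\<Sum>k\<in>dchains n 0 (d+1).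
       real_of_int N * (pochhammer x (n+1))^2 /
         (fact (n - k!0) * pochhammer y (n + k!0 + 1))
       * (pochhammer y (k!d) / (fact (k!d) * real_of_int (N * int (k!d) + a)))
       * (\<Prod>i\<in>{0..d}. (-1) ^ (k!i * \<delta> i) /
            (real_of_int (N * int (k!i) + a)) ^ (2 * b i + 3 - \<delta> i)
          * Wsharp N a (if i = 0 then -1 else int (k!(i-1))) (int (k!i)) (replicate (cc i - 3) 1))))"
proof -
  interpret tstar_params N a
    using assms(1,2) by unfold_locales auto
  have "tstar n N a (tstar_index d c b) = (\<Sum>k\<le>n. coef n k * (lead d c b k * chain_sum d c b k))"
    using has_expansion_tstar_index[OF assms(3)] by (simp add: has_expansion_def)
  also note sum_dchains_eq_expansion[symmetric]
  finally show ?thesis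
    unfolding Let_def tstar_index_def coef_def tail_def factor_def delta_at_def c_ext_def den_def x_def y_def .
qed

end
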